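(* Let $q\ge 3$ and $k\ge 2$ be integers. Then $$SO(S_{q,1,k})=(2qk-2k-4)\sqrt{2}+4k\sqrt{5}.$$
   Context: For a finite simple graph $G$, $SO(G)=\sum_{uv\in E(G)}\sqrt{d_u^2+d_v^2}$, where $d_u$ is the degree of $u$ in $G$ (the Sombor index). The spiro-chain $S_{q,1,k}$ is the chain of $k$ disjoint copies $G_1,\ldots,G_k$ of the cycle $C_q$ with respect to adjacent vertices $x_i,y_i\in V(G_i)$; i.e. it is obtained from the disjoint union of the $k$ cycles by identifying $y_i$ with $x_{i+1}$ for $i=1,\ldots,k-1$. *)

theory Defs
  imports Complex_Main
begin

text \<open>Finite simple graphs are represented by their edge set: a set of
  two-element vertex sets. The degree of a vertex is the number of edges containing it.\<close>

definition degree :: "'a set set \<Rightarrow> 'a \<Rightarrow> nat" where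
  "degree E v = card {e \<in> E. v \<in> e}"

text \<open>Sombor index: sum over edges uv of sqrt(d_u^2 + d_v^2); for an edge e = {u,v}
  with u \<noteq> v, the inner sum over the vertices of e is d_u^2 + d_v^2.\<close>

definition sombor_index :: "'a set set \<Rightarrow> real" where
  "sombor_index E = (\<Sum>e\<in>E. sqrt (\<Sum>v\<in>e. (real (degree E v))^2))"

definition cycle_copy_V :: "nat \<Rightarrow> nat \<Rightarrow> (nat \<times> nat) set" where
  "cycle_copy_V q i = {i} \<times> {0..<q}"

definition cycle_copy_E :: "nat \<Rightarrow> nat \<Rightarrow> (nat \<times> nat) set set" where
  "cycle_copy_E q i = {{(i, j), (i, (j + 1) mod q)} | j. j < q}"

text \<open>Gluing map: x_i = (i,0) and y_i = (i,1) are adjacent in G_i; y_i is identified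
  with x_{i+1} for i = 1..k-1 (every vertex is sent to its class representative).\<close>

definition spiro_glue :: "nat \<Rightarrow> nat \<times> nat \<Rightarrow> nat \<times> nat" where
  "spiro_glue k = (\<lambda>(i, j). if j = 1 \<and> i < k then (i + 1, 0) else (i, j))"

definition spiro_V :: "nat \<Rightarrow> nat \<Rightarrow> (nat \<times> nat) set" where
  "spiro_V q k = spiro_glue k ` (\<Union>i\<in>{1..k}. cycle_copy_V q i)"

definition spiro_E :: "nat \<Rightarrow> nat \<Rightarrow> (nat \<times> nat) set set" where
  "spiro_E q k = (\<lambda>e. spiro_glue k ` e) ` (\<Union>i\<in>{1..k}. cycle_copy_E q i)"

end

theory Submission
  imports Defs
begin

text \<open>Index the edges of the spiro-chain by the edges \<open>(i, j)\<close> of the cycles before gluing; for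
  \<open>q \<ge> 3\<close> no two of them are identified. The \<open>k - 1\<close> cut vertices \<open>y\<^sub>i = x\<^sub>i\<^sub>+\<^sub>1\<close> have degree 4 and
  all other vertices degree 2. Hence the end cycles contribute two edges of type (2,4) and \<open>q - 2\<close>
  of type (2,2), and each inner cycle one edge of type (4,4), two of type (2,4) and \<open>q - 3\<close> of
  type (2,2); summing \<open>sqrt 8 = 2 sqrt 2\<close>, \<open>sqrt 20 = 2 sqrt 5\<close> and \<open>sqrt 32 = 4 sqrt 2\<close> gives the formula.\<close>

lemma degree_image_eq_card_preimage:
  assumes "inj_on f I"
  shows "degree (f ` I) v = card {p \<in> I. v \<in> f p}"
proof -
  have "{e \<in> f ` I. v \<in> e} = f ` {p \<in> I. v \<in> f p}"
    by auto
  moreover have "inj_on f {p \<in> I. v \<in> f p}"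
    using assms by (rule inj_on_subset) auto
  ultimately show ?thesis
    unfolding degree_def by (simp add: card_image)
qed

definition cycle_succ :: "nat \<Rightarrow> nat \<Rightarrow> nat" where
  "cycle_succ q j = (if j + 1 = q then 0 else j + 1)"

lemma Suc_mod_eq_cycle_succ: "j < q \<Longrightarrow> Suc j mod q = cycle_succ q j"
  unfolding cycle_succ_def by auto

lemma cycle_succ_less: "j < q \<Longrightarrow> cycle_succ q j < q"
  unfolding cycle_succ_def by auto

lemma spiro_glue_simp: "spiro_glue k (i, j) = (if j = 1 \<and> i < k then (i + 1, 0) else (i, j))"
  unfolding spiro_glue_def by simp

fun spiro_edge :: "nat \<Rightarrow> nat \<Rightarrow> nat \<times> nat \<Rightarrow> (nat \<times> nat) set" where
  "spiro_edge q k (i, j) = {spiro_glue k (i, j), spiro_glue k (i, cycle_succ q j)}"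

lemma spiro_E_eq_image: "spiro_E q k = spiro_edge q k ` ({1..k} \<times> {0..<q})"
proof -
  have copies: "(\<Union>i\<in>{1..k}. cycle_copy_E q i) =
      (\<lambda>(i, j). {(i, j), (i, cycle_succ q j)}) ` ({1..k} \<times> {0..<q})"
    unfolding cycle_copy_E_def by (fastforce simp: Suc_mod_eq_cycle_succ)
  show ?thesis
    unfolding spiro_E_def copies image_image by (auto intro!: image_cong)
qed

lemma inj_on_spiro_edge: "q \<ge> 3 \<Longrightarrow> inj_on (spiro_edge q k) ({1..k} \<times> {0..<q})"
  unfolding inj_on_def
  by (auto simp: spiro_glue_simp cycle_succ_def doubleton_eq_iff split: if_splits)

lemma mem_spiro_edge:
  assumes "q \<ge> 3" "j < q"
  shows "(a, b) \<in> spiro_edge q k (i, j) \<longleftrightarrow>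
    (j = 1 \<and> i < k \<and> a = i + 1 \<and> b = 0) \<or> (\<not> (j = 1 \<and> i < k) \<and> a = i \<and> b = j) \<or>
    (j = 0 \<and> i < k \<and> a = i + 1 \<and> b = 0) \<or> (j + 1 = q \<and> a = i \<and> b = 0) \<or>
    (j + 1 < q \<and> \<not> (j = 0 \<and> i < k) \<and> a = i \<and> b = j + 1)"
  using assms unfolding spiro_edge.simps spiro_glue_simp cycle_succ_def by auto

lemma preimage_cut_vertex:
  assumes "q \<ge> 3" "2 \<le> a" "a \<le> k"
  shows "{p \<in> {1..k} \<times> {0..<q}. (a, 0) \<in> spiro_edge q k p} =
    {(a, 0), (a, q - 1), (a - 1, 0), (a - 1, 1)}"
  using assms by (auto simp: mem_spiro_edge simp del: spiro_edge.simps)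

lemma preimage_plain_vertex:
  assumes "q \<ge> 3" "1 \<le> a" "a \<le> k" "b < q" "\<not> (b = 1 \<and> a < k)" "\<not> (b = 0 \<and> 2 \<le> a)"
  shows "{p \<in> {1..k} \<times> {0..<q}. (a, b) \<in> spiro_edge q k p} =
    {(a, if b = 0 then q - 1 else b - 1), (a, b)}"
  using assms by (auto simp: mem_spiro_edge simp del: spiro_edge.simps)

definition spiro_degree :: "nat \<Rightarrow> nat \<Rightarrow> nat \<Rightarrow> nat" where
  "spiro_degree k i j = (if (j = 0 \<and> 2 \<le> i) \<or> (j = 1 \<and> i < k) then 4 else 2)"

lemma degree_spiro_glue:
  assumes "q \<ge> 3" "1 \<le> i" "i \<le> k" "j < q"
  shows "degree (spiro_E q k) (spiro_glue k (i, j)) = spiro_degree k i j"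
proof -
  have degree_eq: "degree (spiro_E q k) v = card {p \<in> {1..k} \<times> {0..<q}. v \<in> spiro_edge q k p}"
    for v
    unfolding spiro_E_eq_image using inj_on_spiro_edge[OF assms(1)]
    by (rule degree_image_eq_card_preimage)
  show ?thesis
  proof (cases "(j = 0 \<and> 2 \<le> i) \<or> (j = 1 \<and> i < k)")
    case True
    then obtain a where a: "spiro_glue k (i, j) = (a, 0)" "2 \<le> a" "a \<le> k"
      using assms by (auto simp: spiro_glue_simp)
    have "card {(a, 0), (a, q - 1), (a - 1, 0), (a - 1, 1)} = 4"
      using a assms by auto
    then show ?thesis
      using True a preimage_cut_vertex[OF assms(1) a(2,3)] by (simp add: degree_eq spiro_degree_def)
  next
    case False
    then have "spiro_glue k (i, j) = (i, j)"
      by (auto simp: spiro_glue_simp)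
    moreover have "card {(i, if j = 0 then q - 1 else j - 1), (i, j)} = 2"
      using assms by auto
    ultimately show ?thesis
      using False preimage_plain_vertex[OF assms] by (simp add: degree_eq spiro_degree_def)
  qed
qed

lemma spiro_edge_degree_sum:
  assumes "q \<ge> 3" "1 \<le> i" "i \<le> k" "j < q"
  shows "(\<Sum>v\<in>spiro_edge q k (i, j). (real (degree (spiro_E q k) v))\<^sup>2) =
    (real (spiro_degree k i j))\<^sup>2 + (real (spiro_degree k i (cycle_succ q j)))\<^sup>2"
proof -
  have "spiro_glue k (i, j) \<noteq> spiro_glue k (i, cycle_succ q j)"
    using assms by (auto simp: spiro_glue_simp cycle_succ_def)
  then show ?thesis
    using assms cycle_succ_less[OF assms(4)] by (simp add: degree_spiro_glue)
qed

definition spiro_copy_sombor :: "nat \<Rightarrow> nat \<Rightarrow> nat \<Rightarrow> real" where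
  "spiro_copy_sombor q k i =
    (\<Sum>j<q. sqrt ((real (spiro_degree k i j))\<^sup>2 + (real (spiro_degree k i (cycle_succ q j)))\<^sup>2))"

lemma sombor_index_spiro_E:
  assumes "q \<ge> 3"
  shows "sombor_index (spiro_E q k) = (\<Sum>i\<in>{1..k}. spiro_copy_sombor q k i)"
proof -
  have "sombor_index (spiro_E q k) =
      (\<Sum>p\<in>{1..k} \<times> {0..<q}. sqrt (\<Sum>v\<in>spiro_edge q k p. (real (degree (spiro_E q k) v))\<^sup>2))"
    unfolding sombor_index_def spiro_E_eq_image
    by (subst sum.reindex[OF inj_on_spiro_edge[OF assms]]) (simp add: spiro_E_eq_image[symmetric])
  also have "\<dots> = (\<Sum>(i, j)\<in>{1..k} \<times> {0..<q}.
      sqrt ((real (spiro_degree k i j))\<^sup>2 + (real (spiro_degree k i (cycle_succ q j)))\<^sup>2))"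
    using assms by (intro sum.cong) (auto simp: spiro_edge_degree_sum simp del: spiro_edge.simps)
  finally show ?thesis
    by (simp add: sum.cartesian_product lessThan_atLeast0 spiro_copy_sombor_def)
qed

text \<open>The terms come from the edges \<open>x\<^sub>i y\<^sub>i\<close>, \<open>y\<^sub>i (i, 2)\<close>, \<open>(i, q - 1) x\<^sub>i\<close> and the \<open>q - 3\<close> remaining
  edges, both of whose endpoints have degree 2.\<close>

lemma spiro_copy_sombor_eq:
  assumes "q \<ge> 3"
  shows "spiro_copy_sombor q k i =
    sqrt ((real (spiro_degree k i 0))\<^sup>2 + (real (spiro_degree k i 1))\<^sup>2) +
    sqrt ((real (spiro_degree k i 1))\<^sup>2 + 4) + sqrt (4 + (real (spiro_degree k i 0))\<^sup>2) +
    (real q - 3) * sqrt 8"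
proof -
  let ?term = "\<lambda>j. sqrt ((real (spiro_degree k i j))\<^sup>2 + (real (spiro_degree k i (cycle_succ q j)))\<^sup>2)"
  have split: "{..<q} = insert 0 (insert 1 (insert (q - 1) {2..<q - 1}))"
    using assms by auto
  have "(\<Sum>j\<in>{2..<q - 1}. ?term j) = (\<Sum>j\<in>{2..<q - 1}. sqrt 8)"
    by (intro sum.cong) (auto simp: spiro_degree_def cycle_succ_def)
  then have "(\<Sum>j\<in>{2..<q - 1}. ?term j) = (real q - 3) * sqrt 8"
    using assms by (simp add: of_nat_diff)
  moreover have "cycle_succ q 0 = 1" "cycle_succ q 1 = 2" "cycle_succ q (q - 1) = 0"
    using assms by (auto simp: cycle_succ_def)
  moreover have "spiro_degree k i (q - 1) = 2" "spiro_degree k i 2 = 2"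
    using assms by (auto simp: spiro_degree_def)
  ultimately show ?thesis
    using assms unfolding spiro_copy_sombor_def split by simp
qed

lemma sqrt_8: "sqrt 8 = 2 * sqrt 2"
  using real_sqrt_mult[of 4 2] by simp

lemma sqrt_20: "sqrt 20 = 2 * sqrt 5"
  using real_sqrt_mult[of 4 5] by simp

lemma sqrt_32: "sqrt 32 = 4 * sqrt 2"
  using real_sqrt_mult[of 16 2] by simp

lemma spiro_copy_sombor_end:
  assumes "q \<ge> 3" "k \<ge> 2" "i = 1 \<or> i = k"
  shows "spiro_copy_sombor q k i = (2 * real q - 4) * sqrt 2 + 4 * sqrt 5"
  using assms by (auto simp: spiro_copy_sombor_eq spiro_degree_def sqrt_8 sqrt_20 algebra_simps)

lemma spiro_copy_sombor_inner:
  assumes "q \<ge> 3" "2 \<le> i" "i < k"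
  shows "spiro_copy_sombor q k i = (2 * real q - 2) * sqrt 2 + 4 * sqrt 5"
  using assms by (simp add: spiro_copy_sombor_eq spiro_degree_def sqrt_8 sqrt_20 sqrt_32 algebra_simps)

theorem mainTheorem8:
  fixes q k :: nat
  assumes "q \<ge> 3" and "k \<ge> 2"
  shows "sombor_index (spiro_E q k) =
           (2 * real q * real k - 2 * real k - 4) * sqrt 2 + 4 * real k * sqrt 5"
proof -
  have "{1..k} = insert 1 (insert k {2..<k})"
    using assms by auto
  then have "sombor_index (spiro_E q k) =
      spiro_copy_sombor q k 1 + spiro_copy_sombor q k k + (\<Sum>i\<in>{2..<k}. spiro_copy_sombor q k i)"
    using assms by (simp add: sombor_index_spiro_E)
  also have "\<dots> = 2 * ((2 * real q - 4) * sqrt 2 + 4 * sqrt 5) +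
      (real k - 2) * ((2 * real q - 2) * sqrt 2 + 4 * sqrt 5)"
    using assms by (simp add: spiro_copy_sombor_end spiro_copy_sombor_inner of_nat_diff)
  finally show ?thesis
    by (simp add: algebra_simps)
qed

end
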